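(* Let $n\geq2$ and let $F$ be the twirling map on $\mathcal{B}(M_n(\mathbb{C}))$. Then: (1) $F(W_n^+)=W_n^+$ and $F(W_n^-)=W_n^-$. (2) For all $T\in\mathcal{B}(M_n(\mathbb{C}))$, $F(T)=\mathrm{Tr}(\widehat{T}p^+)\,W_n^+ + \mathrm{Tr}(\widehat{T}p^-)\,W_n^-$. (3) If $T$ is completely positive with Choi representation $T(x)=\sum_{i=1}^d a_ixa_i^*$ ($x\in M_n(\mathbb{C})$), where $d\in\mathbb{N}$ and $a_1,\dots,a_d\in M_n(\mathbb{C})$, then $F(T)=c^+(T)W_n^+ + c^-(T)W_n^-$, where $c^+(T)=\frac14\sum_{i=1}^d\|a_i+a_i^t\|_2^2$ and $c^-(T)=\frac14\sum_{i=1}^d\|a_i-a_i^t\|_2^2$.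
   Context: $\mathcal{B}(M_n(\mathbb{C}))$ is the space of linear maps $M_n(\mathbb{C})\to M_n(\mathbb{C})$. For a unitary $u\in\mathcal{U}(n)$ and $T\in\mathcal{B}(M_n(\mathbb{C}))$ let $\rho_u(T)(x)=uT(u^txu^{t*})u^*$, i.e. $\rho_u(T)=\mathrm{ad}(u)\,T\,\mathrm{ad}(u^t)$ with $\mathrm{ad}(v)(x)=vxv^*$; the twirling map is $F(T)=\int_{\mathcal{U}(n)}\rho_u(T)\,du$ (Haar probability measure). The Holevo–Werner channels are $W_n^+(x)=\frac{1}{n+1}(\mathrm{Tr}_n(x)1_n+x^t)$ and $W_n^-(x)=\frac{1}{n-1}(\mathrm{Tr}_n(x)1_n-x^t)$, with $\mathrm{Tr}_n$ the non-normalized trace and $x^t$ the transpose. With $(e_{ij})$ the matrix units of $M_n(\mathbb{C})$, the Jamiolkowski transform is $\widehat{T}=\frac1n\sum_{i,j=1}^nT(e_{ij})\otimes e_{ij}\in M_n(\mathbb{C})\otimes M_n(\mathbb{C})$; $s=\sum_{i,j}e_{ij}\otimes e_{ji}$ is the flip and $p^\pm=\frac12(1\pm s)$; $\mathrm{Tr}$ denotes the non-normalized trace on $M_n(\mathbb{C})\otimes M_n(\mathbb{C})$. $\|x\|_2=\tau_n(x^*x)^{1/2}$ with $\tau_n$ the normalized trace on $M_n(\mathbb{C})$. *)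

theory Defs
  imports "HOL-Probability.Probability"
begin

text \<open>Complex n x n matrices are modelled as complex^'n^'n, with n = CARD('n).\<close>

definition msc :: "complex \<Rightarrow> complex^'m^'n \<Rightarrow> complex^'m^'n" where
  "msc c A = (\<chi> i j. c * A$i$j)"

definition mconj :: "complex^'m^'n \<Rightarrow> complex^'m^'n" where
  "mconj A = (\<chi> i j. cnj (A$i$j))"

definition madj :: "complex^'m^'n \<Rightarrow> complex^'n^'m" where
  "madj A = transpose (mconj A)"

definition unitary_mat :: "complex^'n^'n \<Rightarrow> bool" where
  "unitary_mat u \<longleftrightarrow> madj u ** u = mat 1 \<and> u ** madj u = mat 1"

definition clinear_map :: "(complex^'n^'n \<Rightarrow> complex^'n^'n) \<Rightarrow> bool" where
  "clinear_map T \<longleftrightarrow> (\<forall>x y. T (x + y) = T x + T y) \<and> (\<forall>c x. T (msc c x) = msc c (T x))"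

text \<open>Haar probability measure on U(n), realised as a Borel probability measure on the
  ambient matrix space concentrated on the unitary group and invariant under left
  multiplication by unitaries.\<close>
definition haar_unitary :: "(complex^'n^'n) measure \<Rightarrow> bool" where
  "haar_unitary \<mu> \<longleftrightarrow> prob_space \<mu> \<and> sets \<mu> = sets borel \<and>
     (AE u in \<mu>. unitary_mat u) \<and>
     (\<forall>v. unitary_mat v \<longrightarrow> distr \<mu> borel (\<lambda>u. v ** u) = \<mu>)"

text \<open>rho_u(T) = ad(u) T ad(u^t).\<close>
definition rho :: "complex^'n^'n \<Rightarrow> (complex^'n^'n \<Rightarrow> complex^'n^'n) \<Rightarrow> complex^'n^'n \<Rightarrow> complex^'n^'n" where
  "rho u T x = u ** T (transpose u ** x ** madj (transpose u)) ** madj u"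

definition twirl :: "(complex^'n^'n) measure \<Rightarrow> (complex^'n^'n \<Rightarrow> complex^'n^'n) \<Rightarrow> complex^'n^'n \<Rightarrow> complex^'n^'n" where
  "twirl \<mu> T x = integral\<^sup>L \<mu> (\<lambda>u. rho u T x)"

definition Wplus :: "complex^'n^'n \<Rightarrow> complex^'n^'n" where
  "Wplus x = msc (1 / of_nat (CARD('n) + 1)) (msc (trace x) (mat 1) + transpose x)"

definition Wminus :: "complex^'n^'n \<Rightarrow> complex^'n^'n" where
  "Wminus x = msc (1 / (of_nat CARD('n) - 1)) (msc (trace x) (mat 1) - transpose x)"

definition munit :: "'n \<Rightarrow> 'n \<Rightarrow> complex^'n^'n" where
  "munit i j = (\<chi> k l. if k = i \<and> l = j then 1 else 0)"

text \<open>Tensor product M_n \<otimes> M_n realised as matrices indexed by 'n \<times> 'n (Kronecker product).\<close>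
definition kron :: "complex^'n::finite^'n \<Rightarrow> complex^'n^'n \<Rightarrow> complex^('n\<times>'n)^('n\<times>'n)" where
  "kron a b = (\<chi> p q. a$(fst p)$(fst q) * b$(snd p)$(snd q))"

definition jam :: "(complex^'n::finite^'n \<Rightarrow> complex^'n^'n) \<Rightarrow> complex^('n\<times>'n)^('n\<times>'n)" where
  "jam T = msc (1 / of_nat CARD('n)) (\<Sum>i\<in>UNIV. \<Sum>j\<in>UNIV. kron (T (munit i j)) (munit i j))"

definition flip :: "complex^('n::finite\<times>'n)^('n\<times>'n)" where
  "flip = (\<Sum>i\<in>UNIV. \<Sum>j\<in>UNIV. kron (munit i j) (munit j i :: complex^'n^'n))"

definition pplus :: "complex^('n::finite\<times>'n)^('n\<times>'n)" where
  "pplus = msc (1/2) (mat 1 + flip)"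

definition pminus :: "complex^('n::finite\<times>'n)^('n\<times>'n)" where
  "pminus = msc (1/2) (mat 1 - flip)"

definition tau :: "complex^'n^'n \<Rightarrow> complex" where
  "tau x = trace x / of_nat CARD('n)"

definition norm2 :: "complex^'n^'n \<Rightarrow> real" where
  "norm2 x = sqrt (Re (tau (madj x ** x)))"

end

theory Submission
  imports Defs
begin

text \<open>
  The twirl F(T) of a linear map T is again linear, and left invariance of the Haar measure makes it
  invariant under every rho_v. Hence its coefficient array K a b c d = F(T)(e_cd)_ab is invariant under
  the induced action of the unitary group: diagonal phases kill all coefficients except those with
  a = b, c = d or a = d, b = c; permutation matrices make the surviving ones three constants R, P, Q;
  and a Hadamard rotation in one coordinate plane gives R = P + Q. So F(T) x = P tr(x) 1 + Q x^t, a
  combination of W+ and W-. Its coefficients are determined by the functionals sum K_aacc and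
  sum K_abba, i.e. n Tr(T^) and n Tr(T^ s), which are rho_u-invariant and hence preserved by F.
  The channels W+ and W- are rho_u-invariant themselves, so F fixes them. For a map in Kraus form
  the two functionals are sum tr(a_i a_i^* ) and sum tr(a_i conj(a_i)), whose sum and difference
  are the squared norms of a_i + a_i^t and a_i - a_i^t.
\<close>

lemma msc_nth [simp]: "msc c A $ i $ j = c * A $ i $ j"
  by (simp add: msc_def)

lemma mconj_nth [simp]: "mconj A $ i $ j = cnj (A $ i $ j)"
  by (simp add: mconj_def)

lemma madj_nth [simp]: "madj A $ i $ j = cnj (A $ j $ i)"
  by (simp add: madj_def transpose_def)

lemma munit_nth [simp]: "munit i j $ k $ l = (if k = i \<and> l = j then 1 else 0)"
  by (simp add: munit_def)

lemma transpose_nth [simp]: "transpose A $ i $ j = A $ j $ i"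
  by (simp add: transpose_def)

lemma mat_nth [simp]: "mat x $ i $ j = (if i = j then x else 0)"
  by (simp add: mat_def)

lemma matrix_mult_nth: "(A ** B) $ i $ j = (\<Sum>k\<in>UNIV. A $ i $ k * B $ k $ j)"
  by (simp add: matrix_matrix_mult_def)

lemma matrix_mult3_nth:
  "(A ** B ** C) $ i $ j = (\<Sum>p\<in>UNIV. \<Sum>q\<in>UNIV. A $ i $ p * B $ p $ q * C $ q $ j)"
  by (simp add: matrix_mult_nth sum_distrib_right) (rule sum.swap)

lemma trace_msc: "trace (msc c A) = c * trace A"
  by (simp add: trace_def sum_distrib_left)

lemma matrix_mult_msc_left: "msc c A ** B = msc c (A ** B)"
  by (simp add: vec_eq_iff matrix_mult_nth sum_distrib_left mult_ac)

lemma matrix_mult_msc_right: "A ** msc c B = msc c (A ** B)"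
  by (simp add: vec_eq_iff matrix_mult_nth sum_distrib_left mult_ac)

lemma matrix_mult_add_right: "((A::'a::semiring_1^'m^'n) + B) ** C = A ** C + B ** C"
  by (simp add: vec_eq_iff matrix_mult_nth sum.distrib distrib_right)

lemma matrix_mult_diff_left: "(A::'a::ring_1^'m^'n) ** (B - C) = A ** B - A ** C"
  by (simp add: vec_eq_iff matrix_mult_nth sum_subtractf right_diff_distrib)

lemma matrix_mult_diff_right: "((A::'a::ring_1^'m^'n) - B) ** C = A ** C - B ** C"
  by (simp add: vec_eq_iff matrix_mult_nth sum_subtractf left_diff_distrib)

lemma madj_add: "madj (A + B) = madj A + madj B"
  and madj_diff: "madj (A - B) = madj A - madj B"
  by (simp_all add: vec_eq_iff)

lemma madj_transpose: "madj (transpose A) = transpose (madj A)"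
  by (simp add: vec_eq_iff)

lemma madj_mult: "madj (A ** B) = madj B ** madj A"
  by (simp add: vec_eq_iff matrix_mult_nth mult.commute)

lemma sum_delta_pair:
  "(\<Sum>a\<in>UNIV. \<Sum>b\<in>UNIV. if (i::'a::finite) = a \<and> (j::'b::finite) = b then f a b else 0) = f i j"
  "(\<Sum>a\<in>UNIV. \<Sum>b\<in>UNIV. if a = i \<and> b = j then f a b else 0) = f i j"
  "(\<Sum>a\<in>UNIV. \<Sum>b\<in>UNIV. if j = b \<and> i = a then f a b else 0) = f i j"
proof -
  have "(\<Sum>b\<in>UNIV. if i = a \<and> j = b then f a b else 0) = (if i = a then f a j else 0)"
    and "(\<Sum>b\<in>UNIV. if a = i \<and> b = j then f a b else 0) = (if a = i then f a j else 0)"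
    and "(\<Sum>b\<in>UNIV. if j = b \<and> i = a then f a b else 0) = (if i = a then f a j else 0)" for a
    by (cases "i = a"; simp)+
  then show "(\<Sum>a\<in>UNIV. \<Sum>b\<in>UNIV. if i = a \<and> j = b then f a b else 0) = f i j"
    and "(\<Sum>a\<in>UNIV. \<Sum>b\<in>UNIV. if a = i \<and> b = j then f a b else 0) = f i j"
    and "(\<Sum>a\<in>UNIV. \<Sum>b\<in>UNIV. if j = b \<and> i = a then f a b else 0) = f i j"
    by simp_all
qed

lemma sum_if_const_cond: "(\<Sum>x\<in>A. if P then f x else 0) = (if P then sum f A else 0)"
  by (cases P) simp_all

lemma sum_UNIV_two_points:
  fixes f :: "'n::finite \<Rightarrow> 'a::comm_monoid_add"
  assumes "i0 \<noteq> i1" and "\<And>k. k \<noteq> i0 \<Longrightarrow> k \<noteq> i1 \<Longrightarrow> f k = 0"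
  shows "(\<Sum>k\<in>UNIV. f k) = f i0 + f i1"
proof -
  have "(\<Sum>k\<in>UNIV. f k) = (\<Sum>k\<in>{i0, i1}. f k)"
    by (rule sum.mono_neutral_right) (auto intro: assms(2))
  with assms(1) show ?thesis
    by simp
qed

lemma sum_UNIV_prod: "(\<Sum>p\<in>(UNIV :: ('a::finite \<times> 'b::finite) set). f p) = (\<Sum>a\<in>UNIV. \<Sum>b\<in>UNIV. f (a, b))"
  by (simp add: sum.cartesian_product)

lemma sum_swap_inner4:
  "(\<Sum>a\<in>A. \<Sum>p\<in>P. \<Sum>q\<in>Q. \<Sum>c\<in>C. \<Sum>d\<in>D. f a p q c d)
   = (\<Sum>p\<in>P. \<Sum>q\<in>Q. \<Sum>c\<in>C. \<Sum>d\<in>D. \<Sum>a\<in>A. f a p q c d)"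
proof -
  have "(\<Sum>a\<in>A. \<Sum>p\<in>P. \<Sum>q\<in>Q. \<Sum>c\<in>C. \<Sum>d\<in>D. f a p q c d)
      = (\<Sum>p\<in>P. \<Sum>a\<in>A. \<Sum>q\<in>Q. \<Sum>c\<in>C. \<Sum>d\<in>D. f a p q c d)"
    by (rule sum.swap)
  also have "\<dots> = (\<Sum>p\<in>P. \<Sum>q\<in>Q. \<Sum>a\<in>A. \<Sum>c\<in>C. \<Sum>d\<in>D. f a p q c d)"
    by (rule sum.cong[OF refl], rule sum.swap)
  also have "\<dots> = (\<Sum>p\<in>P. \<Sum>q\<in>Q. \<Sum>c\<in>C. \<Sum>a\<in>A. \<Sum>d\<in>D. f a p q c d)"
    by (rule sum.cong[OF refl], rule sum.cong[OF refl], rule sum.swap)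
  also have "\<dots> = (\<Sum>p\<in>P. \<Sum>q\<in>Q. \<Sum>c\<in>C. \<Sum>d\<in>D. \<Sum>a\<in>A. f a p q c d)"
    by (rule sum.cong[OF refl], rule sum.cong[OF refl], rule sum.cong[OF refl], rule sum.swap)
  finally show ?thesis .
qed

lemma sum_swap2_inner4:
  "(\<Sum>a\<in>A. \<Sum>b\<in>B. \<Sum>p\<in>P. \<Sum>q\<in>Q. \<Sum>c\<in>C. \<Sum>d\<in>D. f a b p q c d)
   = (\<Sum>p\<in>P. \<Sum>q\<in>Q. \<Sum>c\<in>C. \<Sum>d\<in>D. \<Sum>a\<in>A. \<Sum>b\<in>B. f a b p q c d)"
  by (simp only: sum_swap_inner4[where A = B] sum_swap_inner4[where A = A])

section \<open>Unitary matrices\<close>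

lemma unitary_mat_columns:
  assumes "unitary_mat u"
  shows "(\<Sum>k\<in>UNIV. cnj (u$k$i) * u$k$j) = (if i = j then 1 else 0)"
proof -
  have "(madj u ** u) $ i $ j = mat 1 $ i $ j"
    using assms by (simp add: unitary_mat_def)
  then show ?thesis
    by (simp add: matrix_mult_nth)
qed

lemma unitary_mat_columns':
  assumes "unitary_mat u"
  shows "(\<Sum>k\<in>UNIV. u$k$i * cnj (u$k$j)) = (if i = j then 1 else 0)"
proof -
  have "cnj (\<Sum>k\<in>UNIV. cnj (u$k$i) * u$k$j) = cnj (if i = j then 1 else 0)"
    using unitary_mat_columns[OF assms] by simp
  then show ?thesis
    by (simp add: mult.commute split: if_splits)
qed

lemma unitary_mat_entry_le_1:
  assumes "unitary_mat u"
  shows "cmod (u$i$j) \<le> 1"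
proof -
  have "complex_of_real (\<Sum>k\<in>UNIV. (cmod (u$k$j))\<^sup>2) = (\<Sum>k\<in>UNIV. cnj (u$k$j) * u$k$j)"
    by (simp add: complex_norm_square mult.commute del: of_real_power)
  then have "complex_of_real (\<Sum>k\<in>UNIV. (cmod (u$k$j))\<^sup>2) = 1"
    using unitary_mat_columns[OF assms, of j j] by simp
  then have "(\<Sum>k\<in>UNIV. (cmod (u$k$j))\<^sup>2) = 1"
    using of_real_eq_1_iff by blast
  moreover have "(cmod (u$i$j))\<^sup>2 \<le> (\<Sum>k\<in>UNIV. (cmod (u$k$j))\<^sup>2)"
    by (rule member_le_sum) auto
  ultimately show ?thesis
    by (simp add: abs_square_le_1)
qed

lemma bounded_unitary: "bounded {u :: complex^'n^'n. unitary_mat u}"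
proof -
  have "norm u \<le> of_nat (CARD('n) * CARD('n))" if "unitary_mat u" for u :: "complex^'n^'n"
  proof -
    have "norm u \<le> (\<Sum>i\<in>UNIV. norm (u$i))"
      by (simp add: norm_vec_def L2_set_le_sum)
    also have "\<dots> \<le> (\<Sum>i\<in>UNIV. \<Sum>j\<in>UNIV. cmod (u$i$j))"
      by (intro sum_mono) (simp add: norm_vec_def L2_set_le_sum)
    also have "\<dots> \<le> (\<Sum>i\<in>(UNIV::'n set). \<Sum>j\<in>(UNIV::'n set). 1)"
      by (intro sum_mono unitary_mat_entry_le_1[OF that])
    finally show ?thesis
      by simp
  qed
  then show ?thesis
    unfolding bounded_iff by blast
qed

lemma continuous_on_matrix_mult [continuous_intros]:
  fixes f :: "'a::topological_space \<Rightarrow> 'b::real_normed_algebra_1^'k^'m"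
    and g :: "'a \<Rightarrow> 'b^'n^'k"
  assumes "continuous_on S f" and "continuous_on S g"
  shows "continuous_on S (\<lambda>x. f x ** g x)"
  unfolding matrix_matrix_mult_def
  by (intro continuous_on_vec_lambda continuous_intros continuous_on_component assms)

lemma continuous_on_madj [continuous_intros]:
  fixes f :: "'a::topological_space \<Rightarrow> complex^'n^'m"
  shows "continuous_on S f \<Longrightarrow> continuous_on S (\<lambda>x. madj (f x))"
  unfolding madj_def mconj_def transpose_def
  by (intro continuous_on_vec_lambda continuous_intros continuous_on_component)

lemma continuous_on_transpose [continuous_intros]:
  fixes f :: "'a::topological_space \<Rightarrow> 'b::real_normed_vector^'n^'m"
  shows "continuous_on S f \<Longrightarrow> continuous_on S (\<lambda>x. transpose (f x))"
  unfolding transpose_def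
  by (intro continuous_on_vec_lambda continuous_intros continuous_on_component)

lemma compact_unitary: "compact {u :: complex^'n^'n. unitary_mat u}"
  unfolding compact_eq_bounded_closed
proof (intro conjI bounded_unitary)
  have "closed ({u :: complex^'n^'n. madj u ** u = mat 1} \<inter> {u. u ** madj u = mat 1})"
    by (intro closed_Int closed_Collect_eq continuous_intros)
  then show "closed {u :: complex^'n^'n. unitary_mat u}"
    by (simp add: unitary_mat_def Collect_conj_eq)
qed

definition diag_mat :: "('n \<Rightarrow> complex) \<Rightarrow> complex^'n^'n" where
  "diag_mat z = (\<chi> i j. if i = j then z i else 0)"

lemma diag_mat_nth [simp]: "diag_mat z $ i $ j = (if i = j then z i else 0)"
  by (simp add: diag_mat_def)

lemma unitary_diag_mat:
  assumes "\<And>i. cmod (z i) = 1"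
  shows "unitary_mat (diag_mat z)"
proof -
  have "cnj (z i) * z i = 1" for i
    using assms[of i] by (metis complex_norm_square mult.commute of_real_1 power_one)
  then show ?thesis
    by (simp add: unitary_mat_def vec_eq_iff matrix_mult_nth if_distrib[of "\<lambda>w. w * _"]
        if_distrib[of "\<lambda>w. _ * w"] mult.commute cong: if_cong)
qed

definition perm_mat :: "('n \<Rightarrow> 'n) \<Rightarrow> complex^'n^'n" where
  "perm_mat s = (\<chi> i j. if s i = j then 1 else 0)"

lemma unitary_perm_mat:
  assumes "bij s"
  shows "unitary_mat (perm_mat s)"
proof -
  have "(\<Sum>k\<in>UNIV. if s k = i then 1 else 0) = (1::complex)" for i
  proof -
    have "(\<Sum>k\<in>UNIV. if s k = i then 1 else 0) = (\<Sum>k\<in>UNIV. if inv s i = k then 1 else (0::complex))"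
      using assms by (intro sum.cong) (auto simp: bij_is_inj bij_is_surj surj_f_inv_f)
    then show ?thesis
      by simp
  qed
  moreover have "s i = s j \<longleftrightarrow> i = j" for i j
    using assms by (simp add: bij_def inj_eq)
  ultimately show ?thesis
    by (simp add: unitary_mat_def perm_mat_def vec_eq_iff matrix_mult_nth if_distrib[of "\<lambda>w. w * _"]
        if_distrib[of cnj] cong: if_cong)
qed

definition hadamard_mat :: "'n \<Rightarrow> 'n \<Rightarrow> complex^'n^'n" where
  "hadamard_mat i0 i1 = (\<chi> i j. if i \<in> {i0, i1} \<and> j \<in> {i0, i1}
     then (if i = i1 \<and> j = i1 then - of_real (sqrt (1/2)) else of_real (sqrt (1/2)))
     else if i = j then 1 else 0)"

lemma unitary_hadamard_mat:
  assumes "i0 \<noteq> i1"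
  shows "unitary_mat (hadamard_mat i0 i1)"
proof -
  let ?H = "hadamard_mat i0 i1"
  have h: "complex_of_real (sqrt (1/2)) * of_real (sqrt (1/2)) = 1/2"
    by (simp flip: of_real_mult)
  have "madj ?H = ?H"
    by (auto simp: vec_eq_iff hadamard_mat_def)
  have "(?H ** ?H) $ i $ j = mat 1 $ i $ j" for i j
  proof (cases "i \<in> {i0, i1} \<and> j \<in> {i0, i1}")
    case True
    then show ?thesis
      using assms by (auto simp: matrix_mult_nth sum_UNIV_two_points[OF assms] hadamard_mat_def h)
  next
    case False
    then show ?thesis
      by (auto simp: matrix_mult_nth hadamard_mat_def if_distrib[of "\<lambda>w. w * _"]
          if_distrib[of "\<lambda>w. _ * w"] cong: if_cong intro!: sum.neutral)
  qed
  then have "?H ** ?H = mat 1"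
    by (simp add: vec_eq_iff)
  with \<open>madj ?H = ?H\<close> show ?thesis
    by (simp add: unitary_mat_def)
qed

definition mat_coeff :: "(complex^'n^'n \<Rightarrow> complex^'n^'n) \<Rightarrow> 'n \<Rightarrow> 'n \<Rightarrow> 'n \<Rightarrow> 'n \<Rightarrow> complex" where
  "mat_coeff T a b c d = T (munit c d) $ a $ b"

lemma clinear_map_sum:
  assumes "clinear_map T"
  shows "T (\<Sum>i\<in>A. f i) = (\<Sum>i\<in>A. T (f i))"
proof (induction A rule: infinite_finite_induct)
  case (infinite A)
  then show ?case
    using assms by (simp add: clinear_map_def) (metis add_cancel_right_right)
next
  case empty
  then show ?case
    using assms by (simp add: clinear_map_def) (metis add_cancel_right_right)
next
  case (insert x F)
  then show ?case
    using assms by (simp add: clinear_map_def)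
qed

lemma matrix_eq_sum_munit: "x = (\<Sum>c\<in>UNIV. \<Sum>d\<in>UNIV. msc (x$c$d) (munit c d))"
  by (simp add: vec_eq_iff if_distrib[of "\<lambda>z. _ * z"] sum_delta_pair cong: if_cong)

lemma clinear_map_nth:
  assumes "clinear_map T"
  shows "T x $ a $ b = (\<Sum>c\<in>UNIV. \<Sum>d\<in>UNIV. x$c$d * mat_coeff T a b c d)"
proof -
  have "T x = T (\<Sum>c\<in>UNIV. \<Sum>d\<in>UNIV. msc (x$c$d) (munit c d))"
    by (subst matrix_eq_sum_munit) simp
  also have "\<dots> = (\<Sum>c\<in>UNIV. \<Sum>d\<in>UNIV. msc (x$c$d) (T (munit c d)))"
    using assms by (simp add: clinear_map_sum clinear_map_def)
  finally show ?thesis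
    by (simp add: mat_coeff_def)
qed

lemma continuous_on_clinear_map:
  assumes "clinear_map T"
  shows "continuous_on S T"
proof -
  have T: "T = (\<lambda>x. \<chi> a b. \<Sum>c\<in>UNIV. \<Sum>d\<in>UNIV. x$c$d * mat_coeff T a b c d)"
    by (intro ext) (simp add: vec_eq_iff clinear_map_nth[OF assms])
  show ?thesis
    by (subst T) (intro continuous_on_vec_lambda continuous_intros continuous_on_component)
qed

definition coeff_conj ::
  "complex^'n^'n \<Rightarrow> ('n \<Rightarrow> 'n \<Rightarrow> 'n \<Rightarrow> 'n \<Rightarrow> complex) \<Rightarrow> 'n \<Rightarrow> 'n \<Rightarrow> 'n \<Rightarrow> 'n \<Rightarrow> complex" where
  "coeff_conj u K a b c d = (\<Sum>p\<in>UNIV. \<Sum>q\<in>UNIV. u$a$p * cnj (u$b$q) *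
     (\<Sum>c'\<in>UNIV. \<Sum>d'\<in>UNIV. u$c$c' * cnj (u$d$d') * K p q c' d'))"

lemma transpose_conj_munit:
  "transpose u ** munit c d ** madj (transpose u) = (\<chi> c' d'. u$c$c' * cnj (u$d$d'))"
proof -
  have "(transpose u ** munit c d ** madj (transpose u)) $ c' $ d' = u$c$c' * cnj (u$d$d')" for c' d'
    by (simp add: matrix_mult3_nth if_distrib[of "\<lambda>w. _ * w"] if_distrib[of "\<lambda>w. w * _"]
        sum_delta_pair cong: if_cong)
  then show ?thesis
    by (simp add: vec_eq_iff)
qed

lemma coeff_rho:
  assumes "clinear_map T"
  shows "mat_coeff (rho u T) = coeff_conj u (mat_coeff T)"
proof (intro ext)
  fix a b c d
  let ?y = "\<chi> c' d'. u$c$c' * cnj (u$d$d')"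
  have "mat_coeff (rho u T) a b c d = (\<Sum>p\<in>UNIV. \<Sum>q\<in>UNIV. u$a$p * cnj (u$b$q) * T ?y $ p $ q)"
    by (simp add: mat_coeff_def rho_def matrix_mult3_nth transpose_conj_munit mult_ac)
  also have "\<dots> = coeff_conj u (mat_coeff T) a b c d"
    by (simp add: coeff_conj_def clinear_map_nth[OF assms])
  finally show "mat_coeff (rho u T) a b c d = coeff_conj u (mat_coeff T) a b c d" .
qed

lemma coeff_conj_diag_mat:
  "coeff_conj (diag_mat z) K a b c d = z a * cnj (z b) * z c * cnj (z d) * K a b c d"
  by (simp add: coeff_conj_def if_distrib[of "\<lambda>w. w * _"] if_distrib[of "\<lambda>w. _ * w"]
      if_distrib[of cnj] cong: if_cong)

lemma coeff_conj_perm_mat: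
  "coeff_conj (perm_mat s) K a b c d = K (s a) (s b) (s c) (s d)"
  by (simp add: coeff_conj_def perm_mat_def if_distrib[of "\<lambda>w. w * _"] if_distrib[of "\<lambda>w. _ * w"]
      if_distrib[of cnj] cong: if_cong)

section \<open>Unitarily invariant coefficient arrays\<close>

lemma bij_mapping_two_points:
  fixes i0 i1 a c :: 'a
  assumes "i0 \<noteq> i1" and "a \<noteq> c"
  obtains s where "bij s" and "s i0 = a" and "s i1 = c"
proof
  let ?t = "Transposition.transpose i0 a"
  let ?s = "?t \<circ> Transposition.transpose i1 (?t c)"
  show "bij ?s"
    by (simp add: bij_comp)
  show "?s i0 = a" and "?s i1 = c"
    using assms by (auto simp: Transposition.transpose_def)
qed

context
  fixes K :: "'n::finite \<Rightarrow> 'n \<Rightarrow> 'n \<Rightarrow> 'n \<Rightarrow> complex"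
  assumes invariant: "\<And>v. unitary_mat v \<Longrightarrow> coeff_conj v K = K"
begin

lemma invariant_coeff_vanishes:
  assumes "\<not> (a = b \<and> c = d)" and "\<not> (a = d \<and> b = c)"
  shows "K a b c d = 0"
proof -
  define z :: "'n \<Rightarrow> 'n \<Rightarrow> complex" where "z m k = (if k = m then \<i> else 1)" for m k
  have phase: "K a b c d = z m a * cnj (z m b) * z m c * cnj (z m d) * K a b c d" for m
    using invariant[OF unitary_diag_mat[of "z m"]] coeff_conj_diag_mat[of "z m" K a b c d]
    by (simp add: z_def)
  (* the phase factor at a or at c is a nontrivial power of i unless {a, c} = {b, d} *)
  have "z a a * cnj (z a b) * z a c * cnj (z a d) \<noteq> 1 \<or> z c a * cnj (z c b) * z c c * cnj (z c d) \<noteq> 1"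
    using assms by (auto simp: z_def)
  then show ?thesis
    using phase[of a] phase[of c] by (metis mult_cancel_right2)
qed

lemma invariant_coeff_perm:
  assumes "bij s"
  shows "K (s a) (s b) (s c) (s d) = K a b c d"
  using invariant[OF unitary_perm_mat[OF assms]] coeff_conj_perm_mat[of s K a b c d] by simp

lemma invariant_coeff_pattern:
  assumes "i0 \<noteq> i1"
  shows "K a b c d = (if a = b \<and> c = d then (if a = c then K i0 i0 i0 i0 else K i0 i0 i1 i1)
                     else if a = d \<and> b = c then K i0 i1 i1 i0 else 0)"
proof (cases "a = c")
  case True
  show ?thesis
  proof (cases "b = a \<and> d = a")
    case True
    then show ?thesis
      using \<open>a = c\<close> invariant_coeff_perm[of "Transposition.transpose i0 a" i0 i0 i0 i0] by simp
  next
    case False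
    with \<open>a = c\<close> have "\<not> (a = b \<and> c = d)" and "\<not> (a = d \<and> b = c)"
      by auto
    (* full simp loops on these negated conjunctions of equations *)
    then show ?thesis
      using invariant_coeff_vanishes by (simp only: if_False)
  qed
next
  case False
  obtain s where s: "bij s" "s i0 = a" "s i1 = c"
    using bij_mapping_two_points[OF assms False] .
  consider "a = b \<and> c = d" | "a = d \<and> b = c" | "\<not> (a = b \<and> c = d)" "\<not> (a = d \<and> b = c)"
    by blast
  then show ?thesis
  proof cases
    case 1
    then show ?thesis
      using False invariant_coeff_perm[OF s(1), of i0 i0 i1 i1] by (simp add: s)
  next
    case 2
    then show ?thesis
      using False invariant_coeff_perm[OF s(1), of i0 i1 i1 i0] by (simp add: s)
  next
    case 3
    then show ?thesis
      using invariant_coeff_vanishes by (simp only: if_False)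
  qed
qed

lemma invariant_coeff_diag:
  assumes i01: "i0 \<noteq> i1"
  shows "K i0 i0 i0 i0 = K i0 i0 i1 i1 + K i0 i1 i1 i0"
proof -
  define R P Q where "R = K i0 i0 i0 i0" and "P = K i0 i0 i1 i1" and "Q = K i0 i1 i1 i0"
  have K: "K a b c d = (if a = b \<and> c = d then (if a = c then R else P)
                       else if a = d \<and> b = c then Q else 0)" for a b c d
    unfolding R_def P_def Q_def by (rule invariant_coeff_pattern[OF i01])
  define h :: complex where "h = of_real (sqrt (1/2))"
  have hh: "h * h = 1/2"
    by (simp add: h_def flip: of_real_mult)
  have row: "hadamard_mat i0 i1 $ i0 $ x = (if x \<in> {i0, i1} then h else 0)" for x
    using i01 by (simp add: hadamard_mat_def h_def)
  (* row i0 of the Hadamard matrix is (e_i0 + e_i1) / sqrt 2, so R is a quarter of the sum of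
     the sixteen coefficients with indices in {i0, i1} *)
  have "R = coeff_conj (hadamard_mat i0 i1) K i0 i0 i0 i0"
    using invariant[OF unitary_hadamard_mat[OF i01]] by (simp add: R_def)
  also have "\<dots> = (h * h) * (h * h) * (2 * R + 2 * P + 2 * Q)"
    using i01 by (simp add: coeff_conj_def row sum_UNIV_two_points[OF i01] K h_def algebra_simps)
  also have "\<dots> = (R + P + Q) / 2"
    by (simp add: hh field_simps)
  finally show ?thesis
    by (simp add: R_def P_def Q_def field_simps)
qed

lemma invariant_coeff_eq:
  assumes i01: "i0 \<noteq> i1"
  shows "K a b c d = (if a = b \<and> c = d then K i0 i0 i1 i1 else 0) + (if a = d \<and> b = c then K i0 i1 i1 i0 else 0)"
proof -
  define P Q where "P = K i0 i0 i1 i1" and "Q = K i0 i1 i1 i0"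
  have "K a b c d = (if a = b \<and> c = d then (if a = c then P + Q else P) else if a = d \<and> b = c then Q else 0)"
    unfolding P_def Q_def invariant_coeff_diag[OF i01, symmetric] by (rule invariant_coeff_pattern[OF i01])
  then show ?thesis
    unfolding P_def[symmetric] Q_def[symmetric] by (cases "a = b \<and> c = d"; cases "a = c") auto
qed

end

section \<open>Haar integration and twirling\<close>

lemma haar_measurable_continuous:
  assumes "haar_unitary \<mu>" and "continuous_on UNIV f"
  shows "f \<in> borel_measurable \<mu>"
  using assms measurable_cong_sets[of \<mu> borel borel borel] borel_measurable_continuous_onI
  by (metis haar_unitary_def)

lemma haar_integrable_continuous:
  fixes f :: "complex^'n^'n \<Rightarrow> 'b::{banach, second_countable_topology}"
  assumes haar: "haar_unitary \<mu>" and cont: "continuous_on UNIV f"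
  shows "integrable \<mu> f"
proof -
  interpret prob_space \<mu>
    using haar by (simp add: haar_unitary_def)
  have "compact (f ` {u. unitary_mat u})"
    by (rule compact_continuous_image[OF continuous_on_subset[OF cont] compact_unitary]) simp
  then have "bounded (f ` {u. unitary_mat u})"
    by (rule compact_imp_bounded)
  then obtain B where B: "\<And>u. unitary_mat u \<Longrightarrow> norm (f u) \<le> B"
    unfolding bounded_iff by auto
  have "AE u in \<mu>. unitary_mat u"
    using haar by (simp add: haar_unitary_def)
  then have "AE u in \<mu>. norm (f u) \<le> B"
    by eventually_elim (rule B)
  then show ?thesis
    using haar_measurable_continuous[OF haar cont] by (rule integrable_const_bound)
qed

lemma haar_integral_eq_const:
  assumes haar: "haar_unitary \<mu>" and f: "f \<in> borel_measurable \<mu>"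
    and const: "\<And>u. unitary_mat u \<Longrightarrow> f u = (c::complex)"
  shows "integral\<^sup>L \<mu> f = c"
proof -
  interpret prob_space \<mu>
    using haar by (simp add: haar_unitary_def)
  have "AE u in \<mu>. unitary_mat u"
    using haar by (simp add: haar_unitary_def)
  then have "AE u in \<mu>. f u = c"
    by eventually_elim (rule const)
  then have "integral\<^sup>L \<mu> f = integral\<^sup>L \<mu> (\<lambda>_. c)"
    by (intro integral_cong_AE f) simp_all
  then show ?thesis
    by (simp add: prob_space)
qed

lemma continuous_on_rho:
  assumes "clinear_map T"
  shows "continuous_on S (\<lambda>u. rho u T x)"
  unfolding rho_def
  by (intro continuous_intros continuous_on_compose2[OF continuous_on_clinear_map[OF assms, of UNIV]] subset_UNIV)

lemma integrable_rho:
  assumes "haar_unitary \<mu>" and "clinear_map T"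
  shows "integrable \<mu> (\<lambda>u. rho u T x)" and "integrable \<mu> (\<lambda>u. rho u T x $ a $ b)"
  using assms by (auto intro!: haar_integrable_continuous continuous_on_rho continuous_on_component)

lemma twirl_nth:
  assumes "haar_unitary \<mu>" and "clinear_map T"
  shows "twirl \<mu> T x $ a $ b = integral\<^sup>L \<mu> (\<lambda>u. rho u T x $ a $ b)"
  unfolding twirl_def
  by (rule integral_bounded_linear[OF bounded_linear_compose[OF bounded_linear_vec_nth bounded_linear_vec_nth]
        integrable_rho(1)[OF assms], symmetric])

lemma rho_add:
  assumes "clinear_map T"
  shows "rho u T (x + y) = rho u T x + rho u T y"
  using assms by (simp add: rho_def matrix_add_ldistrib matrix_mult_add_right clinear_map_def)

lemma rho_msc:
  assumes "clinear_map T"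
  shows "rho u T (msc c x) = msc c (rho u T x)"
  using assms by (simp add: rho_def matrix_mult_msc_left matrix_mult_msc_right clinear_map_def)

lemma rho_mult: "rho (v ** u) T x = v ** rho u T (transpose v ** x ** madj (transpose v)) ** madj v"
  by (simp add: rho_def matrix_transpose_mul madj_mult matrix_mul_assoc)

lemma twirl_clinear:
  assumes "haar_unitary \<mu>" and "clinear_map T"
  shows "clinear_map (twirl \<mu> T)"
  unfolding clinear_map_def
  by (simp add: vec_eq_iff twirl_nth[OF assms] rho_add[OF assms(2)] rho_msc[OF assms(2)]
      integrable_rho[OF assms])

lemma rho_twirl:
  assumes haar: "haar_unitary \<mu>" and T: "clinear_map T" and v: "unitary_mat v"
  shows "rho v (twirl \<mu> T) = twirl \<mu> T"
proof (intro ext iffD2[OF vec_eq_iff] allI)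
  fix x a b
  let ?y = "transpose v ** x ** madj (transpose v)"
  have "rho v (twirl \<mu> T) x $ a $ b
      = (\<Sum>p\<in>UNIV. \<Sum>q\<in>UNIV. integral\<^sup>L \<mu> (\<lambda>u. v$a$p * rho u T ?y $ p $ q * madj v $ q $ b))"
    by (simp add: rho_def[of v] matrix_mult3_nth twirl_nth[OF haar T])
  also have "\<dots> = integral\<^sup>L \<mu> (\<lambda>u. rho (v ** u) T x $ a $ b)"
    by (simp add: rho_mult matrix_mult3_nth integrable_rho[OF haar T])
  also have "\<dots> = integral\<^sup>L (distr \<mu> borel (\<lambda>u. v ** u)) (\<lambda>w. rho w T x $ a $ b)"
    by (intro integral_distr[symmetric] haar_measurable_continuous[OF haar] borel_measurable_continuous_onI
        continuous_on_component continuous_on_rho[OF T] continuous_intros)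
  also have "\<dots> = twirl \<mu> T x $ a $ b"
    using haar v by (simp add: haar_unitary_def twirl_nth[OF haar T])
  finally show "rho v (twirl \<mu> T) x $ a $ b = twirl \<mu> T x $ a $ b" .
qed

lemma twirl_eq_self:
  assumes haar: "haar_unitary \<mu>" and T: "clinear_map T"
    and invariant: "\<And>v. unitary_mat v \<Longrightarrow> rho v T = T"
  shows "twirl \<mu> T = T"
proof (intro ext iffD2[OF vec_eq_iff] allI)
  fix x a b
  show "twirl \<mu> T x $ a $ b = T x $ a $ b"
    unfolding twirl_nth[OF haar T]
    by (intro haar_integral_eq_const[OF haar] haar_measurable_continuous[OF haar]
        continuous_on_component continuous_on_rho[OF T]) (simp add: invariant)
qed

lemma unitary_transpose_conj:
  fixes x :: "complex^'n^'n"
  assumes u: "unitary_mat u"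
  defines "y \<equiv> transpose u ** x ** madj (transpose u)"
  shows "trace y = trace x" and "u ** transpose y ** madj u = transpose x"
proof -
  have uu: "u ** madj u = mat 1"
    using u by (simp add: unitary_mat_def)
  have "madj (transpose u) ** transpose u = mat 1"
    by (simp add: madj_transpose uu flip: matrix_transpose_mul)
  then show "trace y = trace x"
    unfolding y_def by (metis matrix_mul_assoc matrix_mul_lid trace_mul_sym)
  have "transpose y = madj u ** transpose x ** u"
    by (simp add: y_def matrix_transpose_mul madj_transpose matrix_mul_assoc)
  then show "u ** transpose y ** madj u = transpose x"
    by (simp add: matrix_mul_assoc uu) (simp add: matrix_mul_assoc[symmetric] uu)
qed

lemma rho_Wplus: "unitary_mat u \<Longrightarrow> rho u Wplus = Wplus"
  by (intro ext) (simp add: rho_def Wplus_def matrix_mult_msc_left matrix_mult_msc_right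
      matrix_add_ldistrib matrix_mult_add_right unitary_transpose_conj unitary_mat_def)

lemma rho_Wminus: "unitary_mat u \<Longrightarrow> rho u Wminus = Wminus"
  by (intro ext) (simp add: rho_def Wminus_def matrix_mult_msc_left matrix_mult_msc_right
      matrix_mult_diff_left matrix_mult_diff_right unitary_transpose_conj unitary_mat_def)

lemma clinear_map_Wplus: "clinear_map Wplus"
  by (simp add: clinear_map_def vec_eq_iff Wplus_def trace_add trace_msc algebra_simps)

lemma clinear_map_Wminus: "clinear_map Wminus"
  by (simp add: clinear_map_def vec_eq_iff Wminus_def trace_add trace_msc algebra_simps)

section \<open>The trace and flip functionals\<close>

definition trace_coeff :: "(complex^'n^'n \<Rightarrow> complex^'n^'n) \<Rightarrow> complex" where
  "trace_coeff T = (\<Sum>a\<in>UNIV. \<Sum>c\<in>UNIV. mat_coeff T a a c c)"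

definition flip_coeff :: "(complex^'n^'n \<Rightarrow> complex^'n^'n) \<Rightarrow> complex" where
  "flip_coeff T = (\<Sum>a\<in>UNIV. \<Sum>b\<in>UNIV. mat_coeff T a b b a)"

lemma sum_coeff_conj_trace:
  assumes u: "unitary_mat u"
  shows "(\<Sum>a\<in>UNIV. \<Sum>c\<in>UNIV. coeff_conj u K a a c c) = (\<Sum>p\<in>UNIV. \<Sum>q\<in>UNIV. K p p q q)"
proof -
  have "(\<Sum>a\<in>UNIV. \<Sum>c\<in>UNIV. coeff_conj u K a a c c) =
     (\<Sum>a\<in>UNIV. \<Sum>c\<in>UNIV. \<Sum>p\<in>UNIV. \<Sum>q\<in>UNIV. \<Sum>r\<in>UNIV. \<Sum>s\<in>UNIV.
        (u$c$r * cnj (u$c$s)) * (u$a$p * cnj (u$a$q)) * K p q r s)"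
    by (simp add: coeff_conj_def sum_distrib_left mult_ac)
  also have "\<dots> = (\<Sum>p\<in>UNIV. \<Sum>q\<in>UNIV. \<Sum>r\<in>UNIV. \<Sum>s\<in>UNIV.
        (\<Sum>c\<in>UNIV. u$c$r * cnj (u$c$s)) * (\<Sum>a\<in>UNIV. u$a$p * cnj (u$a$q)) * K p q r s)"
    by (unfold sum_distrib_left sum_distrib_right) (rule sum_swap2_inner4)
  also have "\<dots> = (\<Sum>p\<in>UNIV. \<Sum>q\<in>UNIV. K p p q q)"
    by (simp add: unitary_mat_columns'[OF u] if_distrib[of "\<lambda>w. w * _"] sum_if_const_cond cong: if_cong)
  finally show ?thesis .
qed

lemma sum_coeff_conj_flip:
  assumes u: "unitary_mat u"
  shows "(\<Sum>a\<in>UNIV. \<Sum>b\<in>UNIV. coeff_conj u K a b b a) = (\<Sum>p\<in>UNIV. \<Sum>q\<in>UNIV. K p q q p)"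
proof -
  have "(\<Sum>a\<in>UNIV. \<Sum>b\<in>UNIV. coeff_conj u K a b b a) =
     (\<Sum>a\<in>UNIV. \<Sum>b\<in>UNIV. \<Sum>p\<in>UNIV. \<Sum>q\<in>UNIV. \<Sum>r\<in>UNIV. \<Sum>s\<in>UNIV.
        (cnj (u$b$q) * u$b$r) * (u$a$p * cnj (u$a$s)) * K p q r s)"
    by (simp add: coeff_conj_def sum_distrib_left mult_ac)
  also have "\<dots> = (\<Sum>p\<in>UNIV. \<Sum>q\<in>UNIV. \<Sum>r\<in>UNIV. \<Sum>s\<in>UNIV.
        (\<Sum>b\<in>UNIV. cnj (u$b$q) * u$b$r) * (\<Sum>a\<in>UNIV. u$a$p * cnj (u$a$s)) * K p q r s)"
    by (unfold sum_distrib_left sum_distrib_right) (rule sum_swap2_inner4)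
  also have "\<dots> = (\<Sum>p\<in>UNIV. \<Sum>q\<in>UNIV. K p q q p)"
    by (simp add: unitary_mat_columns[OF u] unitary_mat_columns'[OF u] if_distrib[of "\<lambda>w. w * _"]
        sum_if_const_cond cong: if_cong)
  finally show ?thesis .
qed

lemma trace_coeff_rho:
  assumes "clinear_map T" and "unitary_mat u"
  shows "trace_coeff (rho u T) = trace_coeff T"
  using assms by (simp add: trace_coeff_def coeff_rho sum_coeff_conj_trace)

lemma flip_coeff_rho:
  assumes "clinear_map T" and "unitary_mat u"
  shows "flip_coeff (rho u T) = flip_coeff T"
  using assms by (simp add: flip_coeff_def coeff_rho sum_coeff_conj_flip)

lemma trace_coeff_twirl:
  assumes haar: "haar_unitary \<mu>" and T: "clinear_map T"
  shows "trace_coeff (twirl \<mu> T) = trace_coeff T"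
proof -
  have "trace_coeff (twirl \<mu> T) = integral\<^sup>L \<mu> (\<lambda>u. trace_coeff (rho u T))"
    by (simp add: trace_coeff_def mat_coeff_def twirl_nth[OF haar T] integrable_rho[OF haar T])
  also have "\<dots> = trace_coeff T"
  proof (rule haar_integral_eq_const[OF haar _ trace_coeff_rho[OF T]])
    show "(\<lambda>u. trace_coeff (rho u T)) \<in> borel_measurable \<mu>"
      unfolding trace_coeff_def mat_coeff_def
      by (intro haar_measurable_continuous[OF haar] continuous_intros continuous_on_component
          continuous_on_rho[OF T])
  qed
  finally show ?thesis .
qed

lemma flip_coeff_twirl:
  assumes haar: "haar_unitary \<mu>" and T: "clinear_map T"
  shows "flip_coeff (twirl \<mu> T) = flip_coeff T"
proof -
  have "flip_coeff (twirl \<mu> T) = integral\<^sup>L \<mu> (\<lambda>u. flip_coeff (rho u T))"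
    by (simp add: flip_coeff_def mat_coeff_def twirl_nth[OF haar T] integrable_rho[OF haar T])
  also have "\<dots> = flip_coeff T"
  proof (rule haar_integral_eq_const[OF haar _ flip_coeff_rho[OF T]])
    show "(\<lambda>u. flip_coeff (rho u T)) \<in> borel_measurable \<mu>"
      unfolding flip_coeff_def mat_coeff_def
      by (intro haar_measurable_continuous[OF haar] continuous_intros continuous_on_component
          continuous_on_rho[OF T])
  qed
  finally show ?thesis .
qed

lemma clinear_map_eq_coeff_pattern:
  assumes S: "clinear_map S"
    and coeff: "\<And>a b c d. mat_coeff S a b c d
                  = (if a = b \<and> c = d then P else 0) + (if a = d \<and> b = c then Q else 0)"
  shows "S x = msc P (msc (trace x) (mat 1)) + msc Q (transpose x)"
proof -
  have "S x $ a $ b = P * (trace x * (if a = b then 1 else 0)) + Q * x $ b $ a" for a b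
    by (simp add: clinear_map_nth[OF S] coeff distrib_left sum.distrib mult.commute
        if_distrib[of "\<lambda>w. _ * w"] sum_if_const_cond sum_delta_pair trace_def sum_distrib_left cong: if_cong)
  then show ?thesis
    by (simp add: vec_eq_iff)
qed

lemma trace_flip_coeff_pattern:
  fixes S :: "complex^'n^'n \<Rightarrow> complex^'n^'n"
  assumes "\<And>a b c d. mat_coeff S a b c d
                  = (if a = b \<and> c = d then P else 0) + (if a = d \<and> b = c then Q else 0)"
  shows "trace_coeff S = of_nat CARD('n) * of_nat CARD('n) * P + of_nat CARD('n) * Q"
    and "flip_coeff S = of_nat CARD('n) * P + of_nat CARD('n) * of_nat CARD('n) * Q"
proof -
  have "(a = b \<and> b = a) = (a = b)" for a b :: 'n
    by auto
  then show "trace_coeff S = of_nat CARD('n) * of_nat CARD('n) * P + of_nat CARD('n) * Q"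
    and "flip_coeff S = of_nat CARD('n) * P + of_nat CARD('n) * of_nat CARD('n) * Q"
    by (simp_all add: trace_coeff_def flip_coeff_def assms sum.distrib algebra_simps)
qed

lemma Wplus_nth: "Wplus x $ a $ b = (trace x * (if a = b then 1 else 0) + x $ b $ a) / (of_nat CARD('n) + 1)"
  for x :: "complex^'n^'n"
  by (simp add: Wplus_def)

lemma Wminus_nth: "Wminus x $ a $ b = (trace x * (if a = b then 1 else 0) - x $ b $ a) / (of_nat CARD('n) - 1)"
  for x :: "complex^'n^'n"
  by (simp add: Wminus_def)

lemma coeff_pattern_eq_Wplus_Wminus:
  fixes x :: "complex^'n^'n"
  defines "N \<equiv> of_nat CARD('n) :: complex"
  assumes n2: "CARD('n) \<ge> 2"
  shows "msc P (msc (trace x) (mat 1)) + msc Q (transpose x)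
       = msc ((N * N * P + N * Q + (N * P + N * N * Q)) / (2 * N)) (Wplus x)
       + msc ((N * N * P + N * Q - (N * P + N * N * Q)) / (2 * N)) (Wminus x)"
proof -
  have "N + 1 = of_nat (Suc CARD('n))"
    by (simp add: N_def)
  then have N: "N \<noteq> 0" "N + 1 \<noteq> 0" "N - 1 \<noteq> 0"
    using n2 unfolding N_def by (auto simp del: of_nat_Suc)
  have plus: "(N * N * P + N * Q + (N * P + N * N * Q)) / (2 * N) / (N + 1) = (P + Q) / 2"
    and minus: "(N * N * P + N * Q - (N * P + N * N * Q)) / (2 * N) / (N - 1) = (P - Q) / 2"
    using N by (simp_all add: divide_simps) (simp_all add: algebra_simps)
  have "P * t + Q * y = (N * N * P + N * Q + (N * P + N * N * Q)) / (2 * N) * ((t + y) / (N + 1))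
      + (N * N * P + N * Q - (N * P + N * N * Q)) / (2 * N) * ((t - y) / (N - 1))" for t y
  proof -
    have "P * t + Q * y = (P + Q) / 2 * (t + y) + (P - Q) / 2 * (t - y)"
      by (simp add: field_simps)
    also have "\<dots> = (N * N * P + N * Q + (N * P + N * N * Q)) / (2 * N) / (N + 1) * (t + y)
        + (N * N * P + N * Q - (N * P + N * N * Q)) / (2 * N) / (N - 1) * (t - y)"
      by (simp only: plus minus)
    finally show ?thesis
      by (simp only: times_divide_eq_right times_divide_eq_left divide_divide_eq_left mult.commute)
  qed
  then show ?thesis
    by (simp add: vec_eq_iff Wplus_nth Wminus_nth N_def[symmetric])
qed

lemma twirl_eq_Wplus_Wminus:
  fixes \<mu> :: "(complex^'n^'n) measure"
  assumes n2: "CARD('n) \<ge> 2" and haar: "haar_unitary \<mu>" and T: "clinear_map T"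
  shows "twirl \<mu> T x = msc ((trace_coeff T + flip_coeff T) / (2 * of_nat CARD('n))) (Wplus x)
                      + msc ((trace_coeff T - flip_coeff T) / (2 * of_nat CARD('n))) (Wminus x)"
proof -
  let ?S = "twirl \<mu> T"
  have S: "clinear_map ?S"
    by (rule twirl_clinear[OF haar T])
  have invariant: "coeff_conj v (mat_coeff ?S) = mat_coeff ?S" if "unitary_mat v" for v
    using coeff_rho[OF S, of v] rho_twirl[OF haar T that] by simp
  obtain i0 i1 :: 'n where i01: "i0 \<noteq> i1"
    using n2 card_le_Suc0_iff_eq[of "UNIV :: 'n set"] by auto
  define P Q where "P = mat_coeff ?S i0 i0 i1 i1" and "Q = mat_coeff ?S i0 i1 i1 i0"
  have coeff: "mat_coeff ?S a b c d = (if a = b \<and> c = d then P else 0) + (if a = d \<and> b = c then Q else 0)"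
    for a b c d
    unfolding P_def Q_def using invariant by (rule invariant_coeff_eq[OF _ i01])
  have "trace_coeff T = trace_coeff ?S" and "flip_coeff T = flip_coeff ?S"
    by (simp_all add: trace_coeff_twirl[OF haar T] flip_coeff_twirl[OF haar T])
  then show ?thesis
    using trace_flip_coeff_pattern[OF coeff] clinear_map_eq_coeff_pattern[OF S coeff]
      coeff_pattern_eq_Wplus_Wminus[OF n2] by simp
qed

section \<open>The Jamiolkowski transform\<close>

lemma kron_nth [simp]: "kron A B $ p $ q = A $ fst p $ fst q * B $ snd p $ snd q"
  by (simp add: kron_def)

lemma jam_nth: "jam T $ p $ q = mat_coeff T (fst p) (fst q) (snd p) (snd q) / of_nat CARD('n)"
  for T :: "complex^'n^'n \<Rightarrow> complex^'n^'n"
  by (simp add: jam_def if_distrib[of "\<lambda>w. _ * w"] sum_delta_pair mat_coeff_def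
      cong: if_cong)

lemma flip_nth: "(flip :: complex^('n::finite \<times> 'n)^('n \<times> 'n)) $ p $ q
    = (if fst p = snd q \<and> snd p = fst q then 1 else 0)"
  by (simp add: flip_def if_distrib[of "\<lambda>w. _ * w"] sum_delta_pair cong: if_cong)

lemma trace_jam: "trace (jam T) = trace_coeff T / of_nat CARD('n)"
  for T :: "complex^'n^'n \<Rightarrow> complex^'n^'n"
  by (simp add: trace_def sum_UNIV_prod jam_nth trace_coeff_def sum_divide_distrib)

lemma trace_jam_flip: "trace (jam T ** flip) = flip_coeff T / of_nat CARD('n)"
  for T :: "complex^'n^'n \<Rightarrow> complex^'n^'n"
  by (simp add: trace_def matrix_mult_nth flip_nth sum_UNIV_prod jam_nth flip_coeff_def
      sum_divide_distrib if_distrib[of "\<lambda>w. _ * w"] sum_delta_pair cong: if_cong)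

lemma trace_jam_pplus: "trace (jam T ** pplus) = (trace_coeff T + flip_coeff T) / (2 * of_nat CARD('n))"
  for T :: "complex^'n^'n \<Rightarrow> complex^'n^'n"
  by (simp add: pplus_def matrix_mult_msc_right trace_msc matrix_add_ldistrib trace_add trace_jam
      trace_jam_flip add_divide_distrib mult.commute)

lemma trace_jam_pminus: "trace (jam T ** pminus) = (trace_coeff T - flip_coeff T) / (2 * of_nat CARD('n))"
  for T :: "complex^'n^'n \<Rightarrow> complex^'n^'n"
  by (simp add: pminus_def matrix_mult_msc_right trace_msc matrix_mult_diff_left trace_sub trace_jam
      trace_jam_flip diff_divide_distrib mult.commute)

section \<open>Maps in Kraus form\<close>

lemma clinear_map_kraus: "clinear_map (\<lambda>x. \<Sum>k<d. a k ** x ** madj (a k))"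
  by (simp add: clinear_map_def vec_eq_iff matrix_mult3_nth algebra_simps sum.distrib sum_distrib_left)

lemma mat_coeff_kraus:
  "mat_coeff (\<lambda>x. \<Sum>k<d. a k ** x ** madj (a k)) i j c e = (\<Sum>k<d. a k $ i $ c * cnj (a k $ j $ e))"
  by (simp add: mat_coeff_def matrix_mult3_nth if_distrib[of "\<lambda>w. _ * w"] if_distrib[of "\<lambda>w. w * _"]
      sum_delta_pair cong: if_cong)

lemma trace_coeff_kraus:
  "trace_coeff (\<lambda>x. \<Sum>k<d. a k ** x ** madj (a k)) = (\<Sum>k<d. trace (a k ** madj (a k)))"
  by (simp add: trace_coeff_def mat_coeff_kraus trace_def matrix_mult_nth sum.swap[where B = "{..<d}"])

lemma flip_coeff_kraus:
  "flip_coeff (\<lambda>x. \<Sum>k<d. a k ** x ** madj (a k)) = (\<Sum>k<d. trace (a k ** mconj (a k)))"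
  by (simp add: flip_coeff_def mat_coeff_kraus trace_def matrix_mult_nth sum.swap[where B = "{..<d}"])

lemma norm2_sq: "(complex_of_real (norm2 B))\<^sup>2 = trace (madj B ** B) / of_nat CARD('n)"
  for B :: "complex^'n^'n"
proof -
  define r where "r = (\<Sum>i\<in>(UNIV::'n set). \<Sum>k\<in>(UNIV::'n set). (cmod (B$k$i))\<^sup>2)"
  have "trace (madj B ** B) = complex_of_real r"
    unfolding r_def trace_def matrix_mult_nth of_real_sum
    by (intro sum.cong refl) (simp add: complex_norm_square mult.commute del: of_real_power)
  moreover have "r \<ge> 0"
    unfolding r_def by (intro sum_nonneg) auto
  ultimately show ?thesis
    by (simp add: norm2_def tau_def of_real_divide flip: of_real_power)
qed

lemma trace_madj_transpose_mult:
  fixes A :: "complex^'n^'n"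
  shows "trace (madj A ** A) = trace (A ** madj A)"
    and "trace (madj A ** transpose A) = trace (A ** mconj A)"
    and "trace (madj (transpose A) ** A) = trace (A ** mconj A)"
    and "trace (transpose A ** madj (transpose A)) = trace (A ** madj A)"
  by (simp_all add: trace_def matrix_mult_nth mult.commute) (subst sum.swap, simp add: mult.commute)+

lemma trace_madj_symm_part:
  fixes A :: "complex^'n^'n"
  shows "trace (madj (A + transpose A) ** (A + transpose A)) = 2 * trace (A ** madj A) + 2 * trace (A ** mconj A)"
    and "trace (madj (A - transpose A) ** (A - transpose A)) = 2 * trace (A ** madj A) - 2 * trace (A ** mconj A)"
  by (simp_all add: madj_add madj_diff matrix_add_ldistrib matrix_mult_add_right matrix_mult_diff_left
      matrix_mult_diff_right trace_add trace_sub trace_madj_transpose_mult)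

lemma kraus_twirl_coeffs:
  fixes a :: "nat \<Rightarrow> complex^'n^'n" and d :: nat
  defines "T \<equiv> \<lambda>x. \<Sum>k<d. a k ** x ** madj (a k)"
  shows "complex_of_real ((1/4) * (\<Sum>k<d. (norm2 (a k + transpose (a k)))\<^sup>2))
           = (trace_coeff T + flip_coeff T) / (2 * of_nat CARD('n))"
    and "complex_of_real ((1/4) * (\<Sum>k<d. (norm2 (a k - transpose (a k)))\<^sup>2))
           = (trace_coeff T - flip_coeff T) / (2 * of_nat CARD('n))"
  unfolding T_def trace_coeff_kraus flip_coeff_kraus
  by (simp_all add: norm2_sq trace_madj_symm_part sum.distrib sum_subtractf sum_divide_distrib[symmetric]
      sum_distrib_left[symmetric] field_simps)

theorem theorem4p5:
  fixes \<mu> :: "(complex^'n^'n) measure"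
  assumes n2: "CARD('n) \<ge> 2"
    and haar: "haar_unitary \<mu>"
  shows "(twirl \<mu> Wplus = Wplus \<and> twirl \<mu> Wminus = Wminus)
    \<and> (\<forall>T. clinear_map T \<longrightarrow>
           twirl \<mu> T = (\<lambda>x. msc (trace (jam T ** pplus)) (Wplus x)
                            + msc (trace (jam T ** pminus)) (Wminus x)))
    \<and> (\<forall>T (d::nat) (a :: nat \<Rightarrow> complex^'n^'n).
           (\<forall>x. T x = (\<Sum>i<d. a i ** x ** madj (a i))) \<longrightarrow>
           twirl \<mu> T = (\<lambda>x. msc (of_real ((1/4) * (\<Sum>i<d. (norm2 (a i + transpose (a i)))^2))) (Wplus x)
                            + msc (of_real ((1/4) * (\<Sum>i<d. (norm2 (a i - transpose (a i)))^2))) (Wminus x)))"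
proof (intro conjI allI impI)
  show "twirl \<mu> Wplus = Wplus"
    by (rule twirl_eq_self[OF haar clinear_map_Wplus rho_Wplus])
  show "twirl \<mu> Wminus = Wminus"
    by (rule twirl_eq_self[OF haar clinear_map_Wminus rho_Wminus])
next
  fix T :: "complex^'n^'n \<Rightarrow> complex^'n^'n"
  assume "clinear_map T"
  then show "twirl \<mu> T = (\<lambda>x. msc (trace (jam T ** pplus)) (Wplus x) + msc (trace (jam T ** pminus)) (Wminus x))"
    by (simp add: fun_eq_iff twirl_eq_Wplus_Wminus[OF n2 haar] trace_jam_pplus trace_jam_pminus)
next
  fix T :: "complex^'n^'n \<Rightarrow> complex^'n^'n" and d :: nat and a :: "nat \<Rightarrow> complex^'n^'n"
  assume "\<forall>x. T x = (\<Sum>i<d. a i ** x ** madj (a i))"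
  then have kraus: "T = (\<lambda>x. \<Sum>i<d. a i ** x ** madj (a i))"
    by blast
  show "twirl \<mu> T = (\<lambda>x. msc (of_real ((1/4) * (\<Sum>i<d. (norm2 (a i + transpose (a i)))^2))) (Wplus x)
                            + msc (of_real ((1/4) * (\<Sum>i<d. (norm2 (a i - transpose (a i)))^2))) (Wminus x))"
    unfolding kraus by (intro ext) (simp only: twirl_eq_Wplus_Wminus[OF n2 haar clinear_map_kraus] kraus_twirl_coeffs)
qed

end
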